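(* Let $N$ be a finite set with $|N|\ge 2$, let $o\in\mathbb{R}^{\Upsilon}$ be an SE objective and let $m\in\mathbb{R}^{\mathcal{S}}$ satisfy $o(a|B)=m(\{a\}\cup B)-m(B)$ for all $a\in N$, $B\subseteq N\setminus\{a\}$. Then for every $T\in\mathcal{S}$ and every $b\in T$, with $R=T\setminus\{b\}$, $$\sum_{\emptyset\neq K\subseteq R}(-1)^{|R\setminus K|}\, o(b|K)=\sum_{L\in\mathcal{S}:\,L\subseteq T}(-1)^{|T\setminus L|}\, m(L).$$ In particular, the left-hand side does not depend on the choice of $b\in T$.
   Context: $\mathrm{DAG}(N)$ is the set of acyclic directed graphs over $N$; $\mathrm{pa}_G(a)$ is the parent set of $a$ in $G$; $G\sim H$ (Markov equivalence) means same adjacencies and same immoralities. $\Upsilon=\{(a|B): a\in N,\ \emptyset\neq B\subseteq N\setminus\{a\}\}$; $\eta_G\in\mathbb{R}^{\Upsilon}$ has $\eta_G(a|B)=1$ if $B=\mathrm{pa}_G(a)$, else $0$. $o\in\mathbb{R}^{\Upsilon}$ is an SE objective if $\langle o,\eta_G\rangle=\langle o,\eta_H\rangle$ whenever $G\sim H$. $\mathcal{S}=\{S\subseteq N:|S|\ge 2\}$. Conventions: $o(b|\emptyset)=0$ for all $b\in N$, and $m(S)=0$ for $|S|\le 1$. *)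

theory Defs
  imports Complex_Main
begin

definition is_dag :: "'a set \<Rightarrow> ('a \<times> 'a) set \<Rightarrow> bool" where
  "is_dag N G \<longleftrightarrow> G \<subseteq> N \<times> N \<and> acyclic G"

definition pa :: "('a \<times> 'a) set \<Rightarrow> 'a \<Rightarrow> 'a set" where
  "pa G a = {b. (b, a) \<in> G}"

definition adj :: "('a \<times> 'a) set \<Rightarrow> 'a \<Rightarrow> 'a \<Rightarrow> bool" where
  "adj G x y \<longleftrightarrow> (x, y) \<in> G \<or> (y, x) \<in> G"

definition immoralities :: "('a \<times> 'a) set \<Rightarrow> ('a \<times> 'a \<times> 'a) set" where
  "immoralities G = {(a, c, b). (a, c) \<in> G \<and> (b, c) \<in> G \<and> a \<noteq> b \<and> \<not> adj G a b}"

definition markov_equiv :: "('a \<times> 'a) set \<Rightarrow> ('a \<times> 'a) set \<Rightarrow> bool" where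
  "markov_equiv G H \<longleftrightarrow> (\<forall>x y. adj G x y = adj H x y) \<and> immoralities G = immoralities H"

text \<open>o(a|B) for (a|B) in Upsilon; the convention o(b|{}) = 0.\<close>
definition o_ext :: "('a \<Rightarrow> 'a set \<Rightarrow> real) \<Rightarrow> 'a \<Rightarrow> 'a set \<Rightarrow> real" where
  "o_ext ob a B = (if B = {} then 0 else ob a B)"

text \<open>m on S = {S. |S| >= 2}; the convention m(S) = 0 for |S| <= 1.\<close>
definition m_ext :: "('a set \<Rightarrow> real) \<Rightarrow> 'a set \<Rightarrow> real" where
  "m_ext m S = (if 2 \<le> card S then m S else 0)"

text \<open>Inner product <o, eta_G>: only entries with nonempty parent set contribute.\<close>
definition score :: "'a set \<Rightarrow> ('a \<Rightarrow> 'a set \<Rightarrow> real) \<Rightarrow> ('a \<times> 'a) set \<Rightarrow> real" where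
  "score N ob G = (\<Sum>a\<in>N. o_ext ob a (pa G a))"

definition SE_objective :: "'a set \<Rightarrow> ('a \<Rightarrow> 'a set \<Rightarrow> real) \<Rightarrow> bool" where
  "SE_objective N ob \<longleftrightarrow>
     (\<forall>G H. is_dag N G \<and> is_dag N H \<and> markov_equiv G H \<longrightarrow> score N ob G = score N ob H)"

end

theory Submission
  imports Defs
begin

text \<open>The conventions o(b|\<emptyset>) = 0 and m(S) = 0 for |S| \<le> 1 only add or remove zero
  terms.\<close>

lemma sum_Pow_insert:
  assumes "finite R" and "b \<notin> R"
  shows "(\<Sum>L\<in>Pow (insert b R). g L) = (\<Sum>K\<in>Pow R. g K + g (insert b K))"
proof -
  have "inj_on (insert b) (Pow R)"
    using assms(2) by (intro inj_onI) (metis PowD insert_ident subset_iff)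
  moreover have "Pow R \<inter> insert b ` Pow R = {}"
    using assms(2) by auto
  ultimately show ?thesis
    using assms(1) by (simp add: Pow_insert sum.union_disjoint sum.reindex sum.distrib)
qed

lemma alternating_sum_increments:
  fixes h :: "'a set \<Rightarrow> real"
  assumes "finite R" and "b \<notin> R"
  shows "(\<Sum>K\<in>Pow R. (-1) ^ card (R - K) * (h (insert b K) - h K))
       = (\<Sum>L\<in>Pow (insert b R). (-1) ^ card (insert b R - L) * h L)"
proof -
  have "(-1) ^ card (R - K) * (h (insert b K) - h K)
      = (-1) ^ card (insert b R - K) * h K + (-1) ^ card (insert b R - insert b K) * h (insert b K)"
    if "K \<subseteq> R" for K
  proof -
    have "insert b R - K = insert b (R - K)" and "insert b R - insert b K = R - K"
      using that assms(2) by auto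
    then show ?thesis
      using assms by (simp add: algebra_simps)
  qed
  then show ?thesis
    using assms by (simp add: sum_Pow_insert)
qed

lemma sum_nonempty_subsets_o_ext:
  assumes "finite R"
  shows "(\<Sum>K\<in>{K. K \<subseteq> R \<and> K \<noteq> {}}. c K * ob b K) = (\<Sum>K\<in>Pow R. c K * o_ext ob b K)"
  using assms
  by (intro sum.mono_neutral_cong_left) (auto simp: o_ext_def)

lemma sum_large_subsets_m_ext:
  assumes "finite T"
  shows "(\<Sum>L\<in>{L. L \<subseteq> T \<and> card L \<ge> 2}. c L * m L) = (\<Sum>L\<in>Pow T. c L * m_ext m L)"
  using assms
  by (intro sum.mono_neutral_cong_left) (auto simp: m_ext_def)

theorem corollary3:
  fixes N :: "'a set" and ob :: "'a \<Rightarrow> 'a set \<Rightarrow> real" and m :: "'a set \<Rightarrow> real"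
  assumes "finite N" and "card N \<ge> 2"
    and "SE_objective N ob"
    and "\<forall>a\<in>N. \<forall>B. B \<subseteq> N - {a} \<longrightarrow> o_ext ob a B = m_ext m (insert a B) - m_ext m B"
    and "T \<subseteq> N" and "card T \<ge> 2" and "b \<in> T"
  shows "(\<Sum>K\<in>{K. K \<subseteq> T - {b} \<and> K \<noteq> {}}. (-1::real) ^ card ((T - {b}) - K) * ob b K)
       = (\<Sum>L\<in>{L. L \<subseteq> T \<and> card L \<ge> 2}. (-1::real) ^ card (T - L) * m L)"
proof -
  define R where "R = T - {b}"
  have "finite T"
    using assms(1,5) finite_subset by blast
  then have R: "finite R" "b \<notin> R" "insert b R = T"
    using assms(7) by (auto simp: R_def)
  have "o_ext ob b K = m_ext m (insert b K) - m_ext m K" if "K \<subseteq> R" for K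
    using assms(4,5,7) that by (auto simp: R_def)
  then have "(\<Sum>K\<in>Pow R. (-1) ^ card (R - K) * o_ext ob b K)
      = (\<Sum>K\<in>Pow R. (-1) ^ card (R - K) * (m_ext m (insert b K) - m_ext m K))"
    by (intro sum.cong) auto
  then have "(\<Sum>K\<in>{K. K \<subseteq> R \<and> K \<noteq> {}}. (-1) ^ card (R - K) * ob b K)
      = (\<Sum>K\<in>Pow R. (-1) ^ card (R - K) * (m_ext m (insert b K) - m_ext m K))"
    using sum_nonempty_subsets_o_ext[OF R(1), of "\<lambda>K. (-1) ^ card (R - K)"] by simp
  also have "\<dots> = (\<Sum>L\<in>Pow T. (-1) ^ card (T - L) * m_ext m L)"
    using alternating_sum_increments[OF R(1,2)] R(3) by simp
  also have "\<dots> = (\<Sum>L\<in>{L. L \<subseteq> T \<and> card L \<ge> 2}. (-1) ^ card (T - L) * m L)"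
    using \<open>finite T\<close> by (simp add: sum_large_subsets_m_ext)
  finally show ?thesis
    unfolding R_def .
qed

end
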